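(* Fix $k\ge2$, $\eta\in[0,1)$ and $0<c<c_k(\eta)$, where $c_k(\eta)=\left(\frac{e}{(1-\eta)(k-1)}\right)^{\frac1{k-1}}$. For any sequence $G_n=(V_n,E_n)$ of asymptotically tree-like $k$-uniform hypergraphs, for $n$ large enough there exists $\zeta=\zeta(n,c,\eta)\in(0,1]$ with $\limsup_n\zeta(k-1)c^{k-1}<e$ such that $$(1-\zeta)\sum_{e\in E_n}\prod_{u\in e}x_u^\ast=(1+o(1))\,\eta c^k|E_n|,$$ where $\mathbf x^\ast=\mathbf x^\ast(c,\zeta)$ is the unique fixed point of $F^{G_n}_{c,\zeta}$ in $[0,c]^{V_n}$. If in addition $(G_n)$ is approximately regular, the same conclusion holds under the weaker assumption $0<c<\overline c_k(\eta)$.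
   Context: Hypergraphs are simple. For a hypergraph $G$ and $S\subseteq V(G)$, $d_G(S)=|\{e\in E(G):S\subseteq e\}|$, $\Delta_\ell(G)=\max_{|S|=\ell}d_G(S)$, $\Delta(G)=\Delta_1(G)$ the maximum degree, $\delta(G)$ the minimum degree, and $\Gamma(G)$ is the maximum over distinct $v,v'$ of the number of $(k-1)$-sets $S$ with $S\cup\{v\},S\cup\{v'\}\in E(G)$. A sequence $(G_n)$ of $k$-uniform hypergraphs is asymptotically tree-like if, with $G=G_n$, $\Delta=\Delta(G)$, as $n\to\infty$: (1) $\Delta\to\infty$; (2) $\Delta_\ell(G)=o(\Delta^{\frac{k-\ell}{k-1}})$ for each $\ell\in\{2,\dots,k-1\}$; (3) $\Gamma(G)=o(\Delta)$; (4) $|E(G)|/|V(G)|=\Omega(\Delta)$. It is approximately regular if also $\delta(G)=(1-o(1))\Delta(G)$. For a $k$-uniform hypergraph $G=(V,E)$ with maximum degree $\Delta$, $(F^G_{c,\zeta}(\mathbf x))_v=c\exp\left(-\frac{\zeta}{\Delta}\sum_{e\ni v}\prod_{u\in e\setminus\{v\}}x_u\right)$; when $\limsup_n\zeta(k-1)c^{k-1}<e$ it has a unique fixed point in $[0,c]^V$ for large $n$. $\eta_k^\ast=e^{-k/(k-1)}$; $\overline c_k(\eta)=\left(\frac{e}{(k-1)(1-\eta/\eta_k^\ast)}\right)^{\frac1{k-1}}$ if $\eta<\eta_k^\ast$ and $+\infty$ otherwise. *)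

theory Defs
  imports "HOL-Analysis.Analysis" "HOL-Library.Landau_Symbols" "HOL-Library.Liminf_Limsup"
    "HOL-Library.FuncSet"
begin

definition uniform_hypergraph :: "nat \<Rightarrow> 'a set \<Rightarrow> 'a set set \<Rightarrow> bool" where
  "uniform_hypergraph k V E \<longleftrightarrow> finite V \<and> (\<forall>e\<in>E. e \<subseteq> V \<and> card e = k)"

definition hdeg :: "'a set set \<Rightarrow> 'a set \<Rightarrow> nat" where
  "hdeg E S = card {e \<in> E. S \<subseteq> e}"

definition maxcodeg :: "'a set \<Rightarrow> 'a set set \<Rightarrow> nat \<Rightarrow> nat" where
  "maxcodeg V E l = Max ({hdeg E S | S. S \<subseteq> V \<and> card S = l} \<union> {0})"

definition maxdeg :: "'a set \<Rightarrow> 'a set set \<Rightarrow> nat" where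
  "maxdeg V E = maxcodeg V E 1"

definition mindeg :: "'a set \<Rightarrow> 'a set set \<Rightarrow> nat" where
  "mindeg V E = Min ({hdeg E {v} | v. v \<in> V} \<union> (if V = {} then {0} else {}))"

definition Gamma_hg :: "nat \<Rightarrow> 'a set \<Rightarrow> 'a set set \<Rightarrow> nat" where
  "Gamma_hg k V E = Max ({card {S. card S = k - 1 \<and> S \<union> {v} \<in> E \<and> S \<union> {v'} \<in> E}
       | v v'. v \<in> V \<and> v' \<in> V \<and> v \<noteq> v'} \<union> {0})"

definition asymp_tree_like :: "nat \<Rightarrow> (nat \<Rightarrow> 'a set) \<Rightarrow> (nat \<Rightarrow> 'a set set) \<Rightarrow> bool" where
  "asymp_tree_like k V E \<longleftrightarrow>
     (\<forall>n. uniform_hypergraph k (V n) (E n)) \<and>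
     filterlim (\<lambda>n. real (maxdeg (V n) (E n))) at_top sequentially \<and>
     (\<forall>l\<in>{2..k-1}. (\<lambda>n. real (maxcodeg (V n) (E n) l))
         \<in> o(\<lambda>n. real (maxdeg (V n) (E n)) powr ((real k - real l) / (real k - 1)))) \<and>
     (\<lambda>n. real (Gamma_hg k (V n) (E n))) \<in> o(\<lambda>n. real (maxdeg (V n) (E n))) \<and>
     (\<lambda>n. real (card (E n)) / real (card (V n))) \<in> \<Omega>(\<lambda>n. real (maxdeg (V n) (E n)))"

definition approx_regular :: "nat \<Rightarrow> (nat \<Rightarrow> 'a set) \<Rightarrow> (nat \<Rightarrow> 'a set set) \<Rightarrow> bool" where
  "approx_regular k V E \<longleftrightarrow> asymp_tree_like k V E \<and>
     ((\<lambda>n. real (mindeg (V n) (E n)) / real (maxdeg (V n) (E n))) \<longlonglongrightarrow> 1)"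

definition Fmap :: "'a set set \<Rightarrow> nat \<Rightarrow> real \<Rightarrow> real \<Rightarrow> ('a \<Rightarrow> real) \<Rightarrow> 'a \<Rightarrow> real" where
  "Fmap E D c \<zeta> x v = c * exp (- (\<zeta> / real D) * (\<Sum>e\<in>{e\<in>E. v \<in> e}. \<Prod>u\<in>e - {v}. x u))"

definition fixpoints :: "'a set \<Rightarrow> 'a set set \<Rightarrow> real \<Rightarrow> real \<Rightarrow> ('a \<Rightarrow> real) set" where
  "fixpoints V E c \<zeta> = {x \<in> V \<rightarrow>\<^sub>E {0..c}. \<forall>v\<in>V. x v = Fmap E (maxdeg V E) c \<zeta> x v}"

definition eta_star :: "nat \<Rightarrow> real" where
  "eta_star k = exp (- real k / (real k - 1))"

definition c_k :: "nat \<Rightarrow> real \<Rightarrow> real" where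
  "c_k k \<eta> = (exp 1 / ((1 - \<eta>) * (real k - 1))) powr (1 / (real k - 1))"

definition cbar_k :: "nat \<Rightarrow> real \<Rightarrow> ereal" where
  "cbar_k k \<eta> = (if \<eta> < eta_star k
      then ereal ((exp 1 / ((real k - 1) * (1 - \<eta> / eta_star k))) powr (1 / (real k - 1)))
      else \<infinity>)"

end

theory Submission
  imports Defs
begin

text \<open>
  On a fixed hypergraph the map \<open>F = Fmap E \<Delta> c \<zeta>\<close> is antitone, and \<open>F \<circ> F\<close> contracts the
  largest log-ratio \<open>ln (p v / q v)\<close> of two positive functions by the factor
  \<open>\<theta> = (k - 1) \<zeta> c\<^sup>k\<^sup>-\<^sup>1 / e\<close>, the \<open>1 / e\<close> coming from \<open>t exp (- t) \<le> 1 / e\<close>.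
  For \<open>\<theta> < 1\<close> this gives a unique fixed point \<open>x(\<zeta>)\<close>, depending continuously on \<open>\<zeta>\<close>.
  At \<open>\<zeta> = 0\<close> the quantity \<open>(1 - \<zeta>) \<Sum>\<^sub>e \<Prod>\<^sub>u\<^sub>\<in>\<^sub>e x(\<zeta>) u\<close> equals \<open>c\<^sup>k |E| > \<eta> c\<^sup>k |E|\<close>, so
  by the intermediate value theorem it equals \<open>\<eta> c\<^sup>k |E|\<close> exactly (the error \<open>\<epsilon>\<close> is \<open>0\<close>) for
  some \<open>\<zeta> \<in> (0, \<zeta>\<^sub>0]\<close>, as soon as it is at most \<open>\<eta> c\<^sup>k |E|\<close> at some \<open>\<zeta>\<^sub>0\<close> with \<open>\<theta> < 1\<close>.

  If \<open>c < c_k k \<eta>\<close>, then \<open>\<zeta>\<^sub>0 = 1 - \<eta>\<close> works because \<open>x(\<zeta>) \<le> c\<close>. In the approximately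
  regular case \<open>x(\<zeta>\<^sub>0) \<le> y exp (o(1))\<close> for the solution \<open>y\<close> of the scalar equation
  \<open>y = c exp (- \<zeta>\<^sub>0 y\<^sup>k\<^sup>-\<^sup>1)\<close>. Parametrising by \<open>\<tau> = \<zeta>\<^sub>0 y\<^sup>k\<^sup>-\<^sup>1\<close>, the condition
  \<open>c < cbar_k k \<eta>\<close> says that \<open>(1 - \<zeta>\<^sub>0) y\<^sup>k < \<eta> c\<^sup>k\<close> holds in the limit \<open>\<tau> \<rightarrow> 1 / (k - 1)\<close>,
  hence for some admissible \<open>\<tau>\<close> slightly smaller.
\<close>

section \<open>Real-variable estimates\<close>

lemma mult_exp_neg_le: "(y::real) * exp (- y) \<le> 1 / exp 1"
proof -
  have "1 + (y - 1) \<le> exp (y - 1)" by (rule exp_ge_add_one_self)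
  hence "y \<le> exp y / exp 1" by (simp add: exp_diff)
  hence "y * exp (- y) \<le> exp y / exp 1 * exp (- y)" by (rule mult_right_mono) auto
  also have "\<dots> = 1 / exp 1" by (simp add: exp_minus field_simps)
  finally show ?thesis .
qed

lemma exp_neg_scaled_diff_le:
  fixes W Z :: real
  assumes "0 \<le> W" "0 \<le> Z"
  shows "exp (- (exp (- W) * Z)) - exp (- Z) \<le> W / exp 1"
proof (cases "Z = 0 \<or> W = 0")
  case True
  then show ?thesis using assms by auto
next
  case False
  hence Z: "Z > 0" and W: "W > 0" using assms by auto
  define f where "f = (\<lambda>t::real. - exp (- exp t))"
  have "DERIV f t :> exp t * exp (- exp t)" for t
    unfolding f_def by (auto intro!: derivative_eq_intros)
  then obtain z where "f (ln Z) - f (ln Z - W) = (ln Z - (ln Z - W)) * (exp z * exp (- exp z))"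
    using MVT2[of "ln Z - W" "ln Z" f "\<lambda>t. exp t * exp (- exp t)"] W by auto
  moreover have "f (ln Z) - f (ln Z - W) = exp (- (exp (- W) * Z)) - exp (- Z)"
    using Z unfolding f_def by (simp add: exp_diff exp_minus field_simps)
  moreover have "exp z * exp (- exp z) \<le> 1 / exp 1" by (rule mult_exp_neg_le)
  ultimately show ?thesis using W by (simp add: mult_left_mono divide_simps)
qed

lemma exp_pair_diff_le:
  fixes \<gamma> W Z :: real
  assumes "0 \<le> \<gamma>" "0 \<le> W" "0 \<le> Z"
  shows "exp \<gamma> * exp (- (exp (- W) * Z)) - exp (- \<gamma>) * exp (- Z) \<le> W / exp 1 + (exp \<gamma> - exp (- \<gamma>))"
proof -
  have "exp (- (exp (- W) * Z)) - exp (- Z) \<le> W / exp 1"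
    using assms by (intro exp_neg_scaled_diff_le)
  moreover have "(exp \<gamma> - 1) * exp (- (exp (- W) * Z)) \<le> exp \<gamma> - 1"
    and "(1 - exp (- \<gamma>)) * exp (- Z) \<le> 1 - exp (- \<gamma>)"
    using assms by (auto intro!: mult_left_le)
  ultimately show ?thesis by (simp add: algebra_simps)
qed

lemma less_powr_inverse_iff:
  fixes b c :: real and m :: nat
  assumes "0 \<le> c" "0 < b" "0 < m"
  shows "c < b powr (1 / real m) \<longleftrightarrow> c ^ m < b"
proof -
  have "b powr (1 / real m) = root m b" using assms by (simp add: root_powr_inverse)
  moreover have "c = root m (c ^ m)" using assms by (simp add: real_root_power_cancel)
  ultimately have "c < b powr (1 / real m) \<longleftrightarrow> root m (c ^ m) < root m b" by simp
  thus ?thesis using assms by simp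
qed

lemma abs_diff_le_of_ratio_le:
  fixes a b c t :: real
  assumes "a \<le> b * t" "b \<le> a * t" "0 < a" "a \<le> c" "0 < b" "b \<le> c"
  shows "\<bar>a - b\<bar> \<le> c * (t - 1)"
proof -
  have *: "x - y \<le> c * (t - 1)" if "x \<le> y * t" "y \<le> x" "0 < y" "y \<le> c" for x y
  proof -
    have "y * 1 \<le> y * t" using that by linarith
    hence "1 \<le> t" using \<open>0 < y\<close> by (simp add: mult_le_cancel_left_pos)
    have "x - y \<le> y * (t - 1)" using that by (simp add: algebra_simps)
    also have "\<dots> \<le> c * (t - 1)" using that \<open>1 \<le> t\<close> by (intro mult_right_mono) auto
    finally show ?thesis .
  qed
  show ?thesis using *[of a b] *[of b a] assms by (cases "b \<le> a") auto
qed

definition subcritical :: "nat \<Rightarrow> real \<Rightarrow> real \<Rightarrow> bool" where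
  "subcritical k c \<zeta> \<longleftrightarrow> 0 \<le> \<zeta> \<and> real (k - 1) * \<zeta> * c ^ (k - 1) < exp 1"

lemma subcritical_mono:
  assumes "subcritical k c \<zeta>0" "0 \<le> \<zeta>" "\<zeta> \<le> \<zeta>0" "0 \<le> c"
  shows "subcritical k c \<zeta>"
proof -
  have "real (k - 1) * \<zeta> * c ^ (k - 1) \<le> real (k - 1) * \<zeta>0 * c ^ (k - 1)"
    using assms by (intro mult_right_mono mult_left_mono) auto
  thus ?thesis using assms unfolding subcritical_def by linarith
qed

text \<open>Bound on \<open>p / q\<close> for \<open>p \<le> exp \<delta> * F q\<close> and \<open>exp (- \<delta>) * F p \<le> q\<close> (see \<open>bracket\<close>);
  the denominator is \<open>1 - \<theta>\<close> for the contraction factor \<open>\<theta>\<close> of \<open>F \<circ> F\<close>.\<close>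
definition ratio_bound :: "nat \<Rightarrow> real \<Rightarrow> real \<Rightarrow> real \<Rightarrow> real" where
  "ratio_bound k c \<zeta> \<delta> =
     (2 * \<delta> + \<zeta> * c ^ (k - 1) * (exp (real (k - 1) * \<delta>) - exp (- (real (k - 1) * \<delta>))))
       / (1 - real (k - 1) * \<zeta> * c ^ (k - 1) / exp 1)"

lemma ratio_bound_0 [simp]: "ratio_bound k c \<zeta> 0 = 0"
  unfolding ratio_bound_def by simp

lemma tendsto_ratio_bound_0:
  assumes "subcritical k c \<zeta>" and "(f \<longlongrightarrow> 0) F"
  shows "((\<lambda>x. ratio_bound k c \<zeta> (f x)) \<longlongrightarrow> 0) F"
proof -
  have "1 - real (k - 1) * \<zeta> * c ^ (k - 1) / exp 1 \<noteq> 0"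
    using assms(1) by (simp add: subcritical_def divide_simps)
  hence "((\<lambda>x. ratio_bound k c \<zeta> (f x)) \<longlongrightarrow> ratio_bound k c \<zeta> 0) F"
    unfolding ratio_bound_def by (intro tendsto_intros assms(2))
  thus ?thesis by simp
qed

section \<open>Fixed points of the map on a single hypergraph\<close>

locale hg_fixpoint =
  fixes V :: "'a set" and E :: "'a set set" and k :: nat and c :: real
  assumes finite_V: "finite V"
    and edges: "\<And>e. e \<in> E \<Longrightarrow> e \<subseteq> V \<and> card e = k"
    and c_pos: "0 < c"
    and maxdeg_pos: "0 < maxdeg V E"
begin

abbreviation D where "D \<equiv> maxdeg V E"

abbreviation F where "F \<zeta> \<equiv> Fmap E D c \<zeta>"

abbreviation B where "B \<equiv> ratio_bound k c"

definition link_sum :: "('a \<Rightarrow> real) \<Rightarrow> 'a \<Rightarrow> real" where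
  "link_sum x v = (\<Sum>e\<in>{e\<in>E. v \<in> e}. \<Prod>u\<in>e - {v}. x u)"

lemma F_eq: "F \<zeta> x v = c * exp (- (\<zeta> / real D) * link_sum x v)"
  unfolding Fmap_def link_sum_def by simp

lemma finite_E: "finite E"
  by (rule finite_subset[of E "Pow V"]) (use edges finite_V in auto)

lemma card_edge [simp]: "e \<in> E \<Longrightarrow> card e = k"
  using edges by blast

lemma finite_edge: "e \<in> E \<Longrightarrow> finite e"
  using edges finite_V finite_subset by blast

lemma card_edge_minus: "e \<in> E \<Longrightarrow> v \<in> e \<Longrightarrow> card (e - {v}) = k - 1"
  using finite_edge by (simp add: card_Diff_singleton)

lemma finite_codegrees: "finite ({hdeg E S | S. S \<subseteq> V \<and> card S = l} \<union> {0})"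
proof -
  have "{hdeg E S | S. S \<subseteq> V \<and> card S = l} \<subseteq> hdeg E ` Pow V" by auto
  thus ?thesis using finite_V finite_subset by auto
qed

lemma deg_le_maxdeg:
  assumes "v \<in> V"
  shows "card {e\<in>E. v \<in> e} \<le> D"
proof -
  have "hdeg E {v} \<in> {hdeg E S | S. S \<subseteq> V \<and> card S = 1} \<union> {0}" using assms by force
  hence "hdeg E {v} \<le> D" unfolding maxdeg_def maxcodeg_def by (rule Max_ge[OF finite_codegrees])
  thus ?thesis unfolding hdeg_def by simp
qed

lemma maxdeg_attained:
  obtains v where "v \<in> V" "card {e\<in>E. v \<in> e} = D"
proof -
  let ?M = "{hdeg E S | S. S \<subseteq> V \<and> card S = 1} \<union> {0}"
  have "D \<in> ?M" unfolding maxdeg_def maxcodeg_def using finite_codegrees by (intro Max_in) auto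
  then obtain S where "S \<subseteq> V" "card S = 1" "hdeg E S = D" using maxdeg_pos by auto
  then obtain v where "S = {v}" by (auto simp: card_1_singleton_iff)
  thus ?thesis using that \<open>S \<subseteq> V\<close> \<open>hdeg E S = D\<close> unfolding hdeg_def by auto
qed

lemma E_nonempty: "E \<noteq> {}"
proof -
  obtain v where "card {e\<in>E. v \<in> e} = D" by (rule maxdeg_attained)
  thus ?thesis using maxdeg_pos by (auto simp: card_gt_0_iff)
qed

lemma mindeg_le_deg:
  assumes "w \<in> V"
  shows "mindeg V E \<le> card {e\<in>E. w \<in> e}"
proof -
  have "mindeg V E = Min ((\<lambda>v. hdeg E {v}) ` V)"
    unfolding mindeg_def using assms by (intro arg_cong[where f = Min]) auto
  also have "\<dots> \<le> hdeg E {w}" using finite_V assms by (intro Min_le) auto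
  finally show ?thesis unfolding hdeg_def by simp
qed

lemma mindeg_le_maxdeg: "mindeg V E \<le> D"
  by (metis maxdeg_attained mindeg_le_deg)

lemma link_sum_nonneg:
  assumes "\<And>u. u \<in> V \<Longrightarrow> 0 \<le> x u"
  shows "0 \<le> link_sum x v"
  unfolding link_sum_def using assms edges by (intro sum_nonneg prod_nonneg) blast

lemma link_sum_mono:
  assumes "\<And>u. u \<in> V \<Longrightarrow> 0 \<le> x u \<and> x u \<le> y u"
  shows "link_sum x v \<le> link_sum y v"
  unfolding link_sum_def using assms edges by (intro sum_mono prod_mono) blast

lemma link_sum_scale:
  assumes "0 \<le> l" "\<And>u. u \<in> V \<Longrightarrow> 0 \<le> x u \<and> l * x u \<le> y u"
  shows "l ^ (k - 1) * link_sum x v \<le> link_sum y v"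
proof -
  have "l ^ (k - 1) * link_sum x v = (\<Sum>e\<in>{e\<in>E. v \<in> e}. \<Prod>u\<in>e - {v}. l * x u)"
    unfolding link_sum_def sum_distrib_left
    by (intro sum.cong refl) (simp add: prod.distrib card_edge_minus)
  also have "\<dots> \<le> link_sum y v"
    unfolding link_sum_def
  proof (intro sum_mono prod_mono)
    fix e u assume "e \<in> {e\<in>E. v \<in> e}" "u \<in> e - {v}"
    hence "u \<in> V" using edges by blast
    thus "0 \<le> l * x u \<and> l * x u \<le> y u" using assms by simp
  qed
  finally show ?thesis .
qed

lemma link_sum_const: "link_sum (\<lambda>_. y) v = real (card {e\<in>E. v \<in> e}) * y ^ (k - 1)"
  unfolding link_sum_def by (simp add: card_edge_minus)

lemma link_sum_le:
  assumes "v \<in> V" "0 \<le> b" "\<And>u. u \<in> V \<Longrightarrow> 0 \<le> x u \<and> x u \<le> b"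
  shows "link_sum x v \<le> real D * b ^ (k - 1)"
proof -
  have "link_sum x v \<le> link_sum (\<lambda>_. b) v" using assms(3) by (rule link_sum_mono)
  also have "\<dots> \<le> real D * b ^ (k - 1)"
    unfolding link_sum_const using deg_le_maxdeg[OF assms(1)] assms(2)
    by (intro mult_right_mono) auto
  finally show ?thesis .
qed

lemma F_pos: "0 < F \<zeta> x v"
  unfolding F_eq using c_pos by simp

lemma F_le_c:
  assumes "0 \<le> \<zeta>" "\<And>u. u \<in> V \<Longrightarrow> 0 \<le> x u"
  shows "F \<zeta> x v \<le> c"
proof -
  have "0 \<le> \<zeta> / real D * link_sum x v" using assms link_sum_nonneg by simp
  thus ?thesis unfolding F_eq using c_pos by simp
qed

lemma F_antimono:
  assumes "0 \<le> \<zeta>" "\<And>u. u \<in> V \<Longrightarrow> 0 \<le> x u \<and> x u \<le> y u"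
  shows "F \<zeta> y v \<le> F \<zeta> x v"
proof -
  have "\<zeta> / real D * link_sum x v \<le> \<zeta> / real D * link_sum y v"
    using assms link_sum_mono by (intro mult_left_mono) auto
  thus ?thesis unfolding F_eq using c_pos by simp
qed

lemma F_cong:
  assumes "\<And>u. u \<in> V \<Longrightarrow> x u = y u"
  shows "F \<zeta> x v = F \<zeta> y v"
  unfolding Fmap_def using assms edges
  by (intro arg_cong[where f = "\<lambda>t. c * exp (- (\<zeta> / real D) * t)"] sum.cong prod.cong) blast+

lemma tendsto_F:
  assumes "\<And>u. u \<in> V \<Longrightarrow> (\<lambda>j. x j u) \<longlonglongrightarrow> y u"
  shows "(\<lambda>j. F \<zeta> (x j) v) \<longlonglongrightarrow> F \<zeta> y v"
  unfolding Fmap_def using assms edges by (intro tendsto_intros) blast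

lemma F_change:
  assumes "v \<in> V" "\<And>u. u \<in> V \<Longrightarrow> 0 \<le> y u \<and> y u \<le> c"
  shows "F \<zeta>' y v \<le> exp (\<bar>\<zeta>' - \<zeta>\<bar> * c ^ (k - 1)) * F \<zeta> y v"
    and "exp (- (\<bar>\<zeta>' - \<zeta>\<bar> * c ^ (k - 1))) * F \<zeta> y v \<le> F \<zeta>' y v"
proof -
  define a where "a = link_sum y v / real D"
  have a0: "0 \<le> a" unfolding a_def using link_sum_nonneg assms(2) by simp
  have "link_sum y v \<le> real D * c ^ (k - 1)" using link_sum_le assms c_pos by simp
  hence a1: "a \<le> c ^ (k - 1)" unfolding a_def using maxdeg_pos by (simp add: divide_simps mult.commute)
  have F1: "F t y v = c * exp (- (t * a))" for t unfolding F_eq a_def by simp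
  have b: "\<bar>(\<zeta>' - \<zeta>) * a\<bar> \<le> \<bar>\<zeta>' - \<zeta>\<bar> * c ^ (k - 1)"
    using a0 a1 by (simp add: abs_mult mult_left_mono)
  have "c * exp (- (\<zeta>' * a)) = exp (- ((\<zeta>' - \<zeta>) * a)) * (c * exp (- (\<zeta> * a)))"
    by (simp add: mult_exp_exp algebra_simps)
  thus "F \<zeta>' y v \<le> exp (\<bar>\<zeta>' - \<zeta>\<bar> * c ^ (k - 1)) * F \<zeta> y v"
    and "exp (- (\<bar>\<zeta>' - \<zeta>\<bar> * c ^ (k - 1))) * F \<zeta> y v \<le> F \<zeta>' y v"
    unfolding F1 using b c_pos by (auto intro!: mult_right_mono)
qed

lemma prod_exp_mult_F:
  assumes "e \<in> E" "v \<in> e"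
  shows "(\<Prod>w\<in>e - {v}. exp a * F \<zeta> q w)
       = exp (real (k - 1) * a) * c ^ (k - 1) * exp (- (\<Sum>w\<in>e - {v}. \<zeta> / real D * link_sum q w))"
proof -
  have "(\<Prod>w\<in>e - {v}. exp a * F \<zeta> q w)
      = (\<Prod>w\<in>e - {v}. exp a) * (\<Prod>w\<in>e - {v}. c) * (\<Prod>w\<in>e - {v}. exp (- (\<zeta> / real D * link_sum q w)))"
    by (simp add: F_eq prod.distrib)
  also have "\<dots> = exp (real (k - 1) * a) * c ^ (k - 1) * exp (- (\<Sum>w\<in>e - {v}. \<zeta> / real D * link_sum q w))"
    using card_edge_minus[OF assms] finite_edge[OF assms(1)]
    by (simp add: exp_of_nat_mult sum_negf[symmetric] exp_sum)
  finally show ?thesis .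
qed

lemma link_sum_ratio_le:
  assumes "0 \<le> U" "\<And>w. w \<in> V \<Longrightarrow> 0 < p w \<and> p w \<le> q w * exp U"
  shows "exp (- (real (k - 1) * U)) * link_sum p v \<le> link_sum q v"
proof -
  have "exp (- U) ^ (k - 1) * link_sum p v \<le> link_sum q v"
  proof (rule link_sum_scale)
    fix u assume u: "u \<in> V"
    have "exp (- U) * p u \<le> exp (- U) * (q u * exp U)" using assms(2)[OF u] by simp
    thus "0 \<le> p u \<and> exp (- U) * p u \<le> q u" using assms(2)[OF u] by (simp add: exp_minus field_simps)
  qed simp
  thus ?thesis by (simp add: exp_of_nat_mult[symmetric])
qed

definition bracket :: "real \<Rightarrow> real \<Rightarrow> ('a \<Rightarrow> real) \<Rightarrow> ('a \<Rightarrow> real) \<Rightarrow> bool" where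
  "bracket \<zeta> \<delta> p q \<longleftrightarrow>
     (\<forall>w\<in>V. 0 < p w \<and> 0 < q w \<and> p w \<le> exp \<delta> * F \<zeta> q w \<and> exp (- \<delta>) * F \<zeta> p w \<le> q w)"

lemma edge_prod_diff_le:
  assumes br: "bracket \<zeta> \<delta> p q" and \<zeta>: "0 \<le> \<zeta>" and \<delta>: "0 \<le> \<delta>"
    and U: "0 \<le> U" "\<And>w. w \<in> V \<Longrightarrow> p w \<le> q w * exp U"
    and e: "e \<in> E" "v \<in> e"
  shows "(\<Prod>u\<in>e - {v}. p u) - (\<Prod>u\<in>e - {v}. q u)
           \<le> c ^ (k - 1) * (real (k - 1) * U / exp 1
                + (exp (real (k - 1) * \<delta>) - exp (- (real (k - 1) * \<delta>))))"
proof -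
  define \<gamma> where "\<gamma> = real (k - 1) * \<delta>"
  define Zp where "Zp = (\<Sum>w\<in>e - {v}. \<zeta> / real D * link_sum p w)"
  define Zq where "Zq = (\<Sum>w\<in>e - {v}. \<zeta> / real D * link_sum q w)"
  define a where "a = exp (- (real (k - 1) * U))"
  have eV: "e \<subseteq> V" using edges e by blast
  have pos: "0 < p w" "0 < q w" if "w \<in> V" for w using br that unfolding bracket_def by auto
  have Zp0: "0 \<le> Zp" unfolding Zp_def using pos \<zeta>
    by (intro sum_nonneg mult_nonneg_nonneg divide_nonneg_nonneg link_sum_nonneg) (auto intro: less_imp_le)
  have "a * Zp = (\<Sum>w\<in>e - {v}. \<zeta> / real D * (a * link_sum p w))"
    unfolding Zp_def sum_distrib_left by (simp add: mult_ac)
  also have "\<dots> \<le> Zq"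
    unfolding Zq_def a_def using link_sum_ratio_le[OF U(1)] pos U(2) \<zeta>
    by (intro sum_mono mult_left_mono) auto
  finally have "exp (- Zq) \<le> exp (- (a * Zp))" by simp
  hence "exp \<gamma> * c ^ (k - 1) * exp (- Zq) \<le> exp \<gamma> * c ^ (k - 1) * exp (- (a * Zp))"
    using c_pos by (intro mult_left_mono) auto
  moreover have "(\<Prod>u\<in>e - {v}. p u) \<le> exp \<gamma> * c ^ (k - 1) * exp (- Zq)"
  proof -
    have "0 \<le> p w \<and> p w \<le> exp \<delta> * F \<zeta> q w" if "w \<in> e - {v}" for w
    proof -
      have "w \<in> V" using that eV by blast
      thus ?thesis using br pos unfolding bracket_def by (auto intro: less_imp_le)
    qed
    hence "(\<Prod>u\<in>e - {v}. p u) \<le> (\<Prod>w\<in>e - {v}. exp \<delta> * F \<zeta> q w)"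
      by (intro prod_mono)
    thus ?thesis unfolding prod_exp_mult_F[OF e] \<gamma>_def Zq_def .
  qed
  moreover have "exp (- \<gamma>) * c ^ (k - 1) * exp (- Zp) \<le> (\<Prod>u\<in>e - {v}. q u)"
  proof -
    have "(\<Prod>w\<in>e - {v}. exp (- \<delta>) * F \<zeta> p w) \<le> (\<Prod>u\<in>e - {v}. q u)"
      using br eV F_pos unfolding bracket_def by (intro prod_mono) (auto intro: less_imp_le)
    thus ?thesis unfolding prod_exp_mult_F[OF e] \<gamma>_def Zp_def by simp
  qed
  ultimately have "(\<Prod>u\<in>e - {v}. p u) - (\<Prod>u\<in>e - {v}. q u)
      \<le> exp \<gamma> * c ^ (k - 1) * exp (- (a * Zp)) - exp (- \<gamma>) * c ^ (k - 1) * exp (- Zp)"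
    by linarith
  also have "\<dots> = c ^ (k - 1) * (exp \<gamma> * exp (- (a * Zp)) - exp (- \<gamma>) * exp (- Zp))"
    by (simp add: algebra_simps)
  also have "\<dots> \<le> c ^ (k - 1) * (real (k - 1) * U / exp 1 + (exp \<gamma> - exp (- \<gamma>)))"
    using exp_pair_diff_le[of \<gamma> "real (k - 1) * U" Zp] \<delta> U Zp0 c_pos
    unfolding a_def \<gamma>_def by (intro mult_left_mono) auto
  finally show ?thesis unfolding \<gamma>_def .
qed

lemma bracket_step:
  assumes br: "bracket \<zeta> \<delta> p q" and \<zeta>: "0 \<le> \<zeta>" and \<delta>: "0 \<le> \<delta>"
    and U: "0 \<le> U" "\<And>w. w \<in> V \<Longrightarrow> p w \<le> q w * exp U"
    and v: "v \<in> V"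
  shows "p v \<le> q v * exp (2 * \<delta> + \<zeta> * c ^ (k - 1) * (real (k - 1) * U / exp 1
            + (exp (real (k - 1) * \<delta>) - exp (- (real (k - 1) * \<delta>)))))"
proof -
  define K where "K = real (k - 1) * U / exp 1 + (exp (real (k - 1) * \<delta>) - exp (- (real (k - 1) * \<delta>)))"
  have K0: "0 \<le> K" unfolding K_def using U \<delta> by (intro add_nonneg_nonneg) auto
  have "link_sum p v - link_sum q v
      = (\<Sum>e\<in>{e\<in>E. v \<in> e}. (\<Prod>u\<in>e - {v}. p u) - (\<Prod>u\<in>e - {v}. q u))"
    unfolding link_sum_def by (simp add: sum_subtractf)
  also have "\<dots> \<le> (\<Sum>e\<in>{e\<in>E. v \<in> e}. c ^ (k - 1) * K)"
    unfolding K_def using edge_prod_diff_le[OF br \<zeta> \<delta> U] by (intro sum_mono) auto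
  also have "\<dots> \<le> real D * (c ^ (k - 1) * K)"
    using deg_le_maxdeg[OF v] K0 c_pos by (simp add: mult_right_mono)
  finally have "\<zeta> / real D * (link_sum p v - link_sum q v) \<le> \<zeta> / real D * (real D * (c ^ (k - 1) * K))"
    using \<zeta> by (intro mult_left_mono) auto
  hence diff: "\<zeta> / real D * link_sum p v - \<zeta> / real D * link_sum q v \<le> \<zeta> * c ^ (k - 1) * K"
    using maxdeg_pos by (simp add: algebra_simps)
  have "p v \<le> exp \<delta> * (c * exp (- (\<zeta> / real D * link_sum q v)))"
    using br v unfolding bracket_def by (simp add: F_eq)
  also have "\<dots> = exp (- \<delta>) * (c * exp (- (\<zeta> / real D * link_sum p v)))
        * exp (2 * \<delta> + (\<zeta> / real D * link_sum p v - \<zeta> / real D * link_sum q v))"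
  proof -
    have "exp (- \<delta>) * exp (- (\<zeta> / real D * link_sum p v))
          * exp (2 * \<delta> + (\<zeta> / real D * link_sum p v - \<zeta> / real D * link_sum q v))
        = exp \<delta> * exp (- (\<zeta> / real D * link_sum q v))"
      by (simp add: mult_exp_exp)
    thus ?thesis by (simp add: algebra_simps)
  qed
  also have "\<dots> \<le> q v * exp (2 * \<delta> + (\<zeta> / real D * link_sum p v - \<zeta> / real D * link_sum q v))"
    using br v unfolding bracket_def by (intro mult_right_mono) (auto simp: F_eq)
  also have "\<dots> \<le> q v * exp (2 * \<delta> + \<zeta> * c ^ (k - 1) * K)"
    using diff br v unfolding bracket_def by (intro mult_left_mono) (auto intro: less_imp_le)
  finally show ?thesis unfolding K_def .
qed

text \<open>Apply \<open>bracket_step\<close> with \<open>U\<close> the largest log-ratio \<open>ln (p w / q w)\<close>: it yields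
  \<open>U \<le> 2 \<delta> + \<theta> U + \<dots>\<close> with \<open>\<theta> < 1\<close>, which is solved for \<open>U\<close>.\<close>
lemma bracket_ratio_le:
  assumes br: "bracket \<zeta> \<delta> p q" and \<zeta>: "subcritical k c \<zeta>" and \<delta>: "0 \<le> \<delta>" and v: "v \<in> V"
  shows "p v \<le> q v * exp (B \<zeta> \<delta>)"
proof -
  have pos: "0 < p w" "0 < q w" if "w \<in> V" for w using br that unfolding bracket_def by auto
  have \<zeta>0: "0 \<le> \<zeta>" using \<zeta> by (simp add: subcritical_def)
  define L where "L = (\<lambda>w. ln (p w / q w)) ` V \<union> {0}"
  define U where "U = Max L"
  have finL: "finite L" unfolding L_def using finite_V by simp
  have U0: "0 \<le> U" unfolding U_def L_def using finL by (intro Max_ge) (auto simp: L_def)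
  have pU: "p w \<le> q w * exp U" if w: "w \<in> V" for w
  proof -
    have "ln (p w / q w) \<le> U" unfolding U_def using finL w by (intro Max_ge) (auto simp: L_def)
    hence "p w / q w \<le> exp U" using pos[OF w] by (metis divide_pos_pos exp_le_cancel_iff exp_ln)
    thus ?thesis using pos[OF w] by (simp add: divide_simps mult.commute)
  qed
  define s where "s = \<zeta> * c ^ (k - 1)"
  define \<theta> where "\<theta> = real (k - 1) * s / exp 1"
  define R where "R = 2 * \<delta> + s * (real (k - 1) * U / exp 1
      + (exp (real (k - 1) * \<delta>) - exp (- (real (k - 1) * \<delta>))))"
  have R0: "0 \<le> R" unfolding R_def s_def using \<zeta>0 \<delta> U0 c_pos by (intro add_nonneg_nonneg mult_nonneg_nonneg) auto
  have "ln (p w / q w) \<le> R" if w: "w \<in> V" for w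
  proof -
    have "p w \<le> q w * exp R" unfolding R_def s_def using bracket_step[OF br \<zeta>0 \<delta> U0 pU w] .
    hence "p w / q w \<le> exp R" using pos[OF w] by (simp add: divide_simps mult.commute)
    thus ?thesis using pos[OF w] by (metis divide_pos_pos exp_gt_zero ln_exp ln_le_cancel_iff)
  qed
  hence "U \<le> R" unfolding U_def L_def using finL R0 by (intro Max.boundedI) (auto simp: L_def)
  hence "U * (1 - \<theta>) \<le> 2 * \<delta> + s * (exp (real (k - 1) * \<delta>) - exp (- (real (k - 1) * \<delta>)))"
    unfolding R_def \<theta>_def by (simp add: algebra_simps)
  moreover have "\<theta> < 1" using \<zeta> unfolding \<theta>_def s_def subcritical_def by (simp add: divide_simps mult.assoc)
  ultimately have "U \<le> B \<zeta> \<delta>"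
    unfolding ratio_bound_def \<theta>_def s_def by (simp add: pos_le_divide_eq mult.assoc)
  hence "q v * exp U \<le> q v * exp (B \<zeta> \<delta>)" using pos[OF v] by simp
  thus ?thesis using pU[OF v] by linarith
qed

definition near_fixpoint :: "real \<Rightarrow> real \<Rightarrow> ('a \<Rightarrow> real) \<Rightarrow> bool" where
  "near_fixpoint \<zeta> \<delta> x \<longleftrightarrow>
     (\<forall>w\<in>V. 0 < x w \<and> exp (- \<delta>) * F \<zeta> x w \<le> x w \<and> x w \<le> exp \<delta> * F \<zeta> x w)"

lemma near_fixpoints_bracket:
  assumes "0 \<le> \<zeta>" "near_fixpoint \<zeta> \<delta> x" "near_fixpoint \<zeta> \<delta> y"
  shows "bracket \<zeta> \<delta> (\<lambda>w. max (x w) (y w)) (\<lambda>w. min (x w) (y w))"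
  unfolding bracket_def
proof
  fix w assume w: "w \<in> V"
  have near: "0 < x u" "0 < y u" "0 \<le> x u" "0 \<le> y u" "exp (- \<delta>) * F \<zeta> x u \<le> x u" "x u \<le> exp \<delta> * F \<zeta> x u"
      "exp (- \<delta>) * F \<zeta> y u \<le> y u" "y u \<le> exp \<delta> * F \<zeta> y u" if "u \<in> V" for u
    using assms that unfolding near_fixpoint_def by (auto intro: less_imp_le)
  have "F \<zeta> x w \<le> F \<zeta> (\<lambda>u. min (x u) (y u)) w" "F \<zeta> y w \<le> F \<zeta> (\<lambda>u. min (x u) (y u)) w"
    "F \<zeta> (\<lambda>u. max (x u) (y u)) w \<le> F \<zeta> x w" "F \<zeta> (\<lambda>u. max (x u) (y u)) w \<le> F \<zeta> y w"
    using near(3,4) by (auto intro!: F_antimono[OF assms(1)])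
  hence "exp \<delta> * F \<zeta> x w \<le> exp \<delta> * F \<zeta> (\<lambda>u. min (x u) (y u)) w"
    "exp \<delta> * F \<zeta> y w \<le> exp \<delta> * F \<zeta> (\<lambda>u. min (x u) (y u)) w"
    "exp (- \<delta>) * F \<zeta> (\<lambda>u. max (x u) (y u)) w \<le> exp (- \<delta>) * F \<zeta> x w"
    "exp (- \<delta>) * F \<zeta> (\<lambda>u. max (x u) (y u)) w \<le> exp (- \<delta>) * F \<zeta> y w"
    by simp_all
  thus "0 < max (x w) (y w) \<and> 0 < min (x w) (y w)
      \<and> max (x w) (y w) \<le> exp \<delta> * F \<zeta> (\<lambda>u. min (x u) (y u)) w
      \<and> exp (- \<delta>) * F \<zeta> (\<lambda>u. max (x u) (y u)) w \<le> min (x w) (y w)"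
    using near[OF w] by linarith
qed

lemma near_fixpoints_ratio_le:
  assumes "subcritical k c \<zeta>" "0 \<le> \<delta>" "near_fixpoint \<zeta> \<delta> x" "near_fixpoint \<zeta> \<delta> y" "v \<in> V"
  shows "x v \<le> y v * exp (B \<zeta> \<delta>)"
proof -
  have "bracket \<zeta> \<delta> (\<lambda>w. max (x w) (y w)) (\<lambda>w. min (x w) (y w))"
    using assms by (intro near_fixpoints_bracket) (auto simp: subcritical_def)
  hence "x v \<le> min (x v) (y v) * exp (B \<zeta> \<delta>)"
    using assms bracket_ratio_le by fastforce
  also have "\<dots> \<le> y v * exp (B \<zeta> \<delta>)" by (intro mult_right_mono) auto
  finally show ?thesis .
qed

lemma fixpoint_bounds:
  assumes "x \<in> fixpoints V E c \<zeta>" "v \<in> V"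
  shows "0 < x v" "x v \<le> c" "F \<zeta> x v = x v"
proof -
  show eq: "F \<zeta> x v = x v" using assms unfolding fixpoints_def by auto
  show "0 < x v" using F_pos eq by metis
  show "x v \<le> c" using assms unfolding fixpoints_def by (auto dest: PiE_mem)
qed

lemma fixpoint_near_fixpoint:
  assumes "x \<in> fixpoints V E c \<zeta>" "0 \<le> \<delta>"
  shows "near_fixpoint \<zeta> \<delta> x"
  unfolding near_fixpoint_def
proof
  fix w assume "w \<in> V"
  with assms(1) have "0 < x w" "F \<zeta> x w = x w" by (auto dest: fixpoint_bounds)
  thus "0 < x w \<and> exp (- \<delta>) * F \<zeta> x w \<le> x w \<and> x w \<le> exp \<delta> * F \<zeta> x w"
    using assms(2) by (auto intro: mult_left_le_one_le order_trans[OF _ mult_right_mono[of 1]])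
qed

lemma fixpoint_unique:
  assumes "subcritical k c \<zeta>" "x \<in> fixpoints V E c \<zeta>" "y \<in> fixpoints V E c \<zeta>"
  shows "x = y"
proof (rule PiE_ext)
  show "x \<in> V \<rightarrow>\<^sub>E {0..c}" "y \<in> V \<rightarrow>\<^sub>E {0..c}" using assms unfolding fixpoints_def by auto
  have "near_fixpoint \<zeta> 0 x" "near_fixpoint \<zeta> 0 y" using assms by (auto intro: fixpoint_near_fixpoint)
  thus "x v = y v" if "v \<in> V" for v
    using near_fixpoints_ratio_le[OF assms(1) order_refl] that by (simp add: order_antisym)
qed

lemma F_square_mono:
  assumes "0 \<le> \<zeta>" "\<And>u. u \<in> V \<Longrightarrow> 0 \<le> x u \<and> x u \<le> y u"
  shows "F \<zeta> (F \<zeta> x) v \<le> F \<zeta> (F \<zeta> y) v"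
proof (rule F_antimono[OF assms(1)])
  fix u assume "u \<in> V"
  thus "0 \<le> F \<zeta> y u \<and> F \<zeta> y u \<le> F \<zeta> x u" using F_pos F_antimono assms by (auto intro: less_imp_le)
qed

lemma F_square_fixpoint_exists:
  assumes \<zeta>: "0 \<le> \<zeta>"
  obtains u where "\<And>v. F \<zeta> (F \<zeta> u) v = u v"
proof -
  define a where "a j = ((\<lambda>x. F \<zeta> (F \<zeta> x)) ^^ j) (\<lambda>_. c)" for j
  have a_Suc: "a (Suc j) = F \<zeta> (F \<zeta> (a j))" for j unfolding a_def by simp
  have a_bounds: "0 \<le> a j v \<and> a j v \<le> c" for j v
  proof (cases j)
    case (Suc i)
    have "F \<zeta> (F \<zeta> (a i)) v \<le> c" using F_pos by (intro F_le_c \<zeta> less_imp_le)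
    thus ?thesis using Suc a_Suc F_pos[THEN less_imp_le] by simp
  qed (use c_pos in \<open>simp add: a_def\<close>)
  have a_dec: "a (Suc j) v \<le> a j v" for j v
  proof (induction j arbitrary: v)
    case 0
    show ?case using a_bounds[of 1 v] by (simp add: a_def)
  next
    case (Suc j)
    have "F \<zeta> (F \<zeta> (a (Suc j))) v \<le> F \<zeta> (F \<zeta> (a j)) v"
      using Suc a_bounds by (intro F_square_mono \<zeta>) auto
    thus ?case by (metis a_Suc)
  qed
  define u where "u v = lim (\<lambda>j. a j v)" for v
  have a_lim: "(\<lambda>j. a j v) \<longlonglongrightarrow> u v" for v
  proof -
    have "decseq (\<lambda>j. a j v)" using a_dec by (intro decseq_SucI)
    hence "convergent (\<lambda>j. a j v)"
      using a_bounds by (intro Bseq_monoseq_convergent decseq_bounded[of _ 0] decseq_imp_monoseq) auto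
    thus ?thesis unfolding u_def by (simp add: convergent_LIMSEQ_iff)
  qed
  have "(\<lambda>j. a (Suc j) v) \<longlonglongrightarrow> F \<zeta> (F \<zeta> u) v" for v
    unfolding a_Suc using a_lim by (intro tendsto_F)
  hence "F \<zeta> (F \<zeta> u) v = u v" for v using LIMSEQ_Suc[OF a_lim] by (rule LIMSEQ_unique)
  thus thesis by (rule that)
qed

lemma fixpoint_exists:
  assumes \<zeta>: "subcritical k c \<zeta>"
  shows "\<exists>x. x \<in> fixpoints V E c \<zeta>"
proof -
  have \<zeta>0: "0 \<le> \<zeta>" using \<zeta> by (simp add: subcritical_def)
  obtain u where u: "\<And>v. F \<zeta> (F \<zeta> u) v = u v" using F_square_fixpoint_exists[OF \<zeta>0] by blast
  define l where "l = F \<zeta> u"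
  have u_eq: "u = F \<zeta> l" unfolding l_def using u by auto
  have u_pos: "0 < u v" for v unfolding u_eq by (rule F_pos)
  have l_pos: "0 < l v" for v unfolding l_def by (rule F_pos)
  have "bracket \<zeta> 0 u l" "bracket \<zeta> 0 l u"
    unfolding bracket_def using u_pos l_pos by (simp_all add: u_eq[symmetric] l_def[symmetric])
  hence ul: "u v = l v" if "v \<in> V" for v
    using bracket_ratio_le[OF _ \<zeta> order_refl that] by (simp add: order_antisym)
  have "restrict u V \<in> fixpoints V E c \<zeta>"
    unfolding fixpoints_def
  proof (intro CollectI conjI ballI PiE_I)
    fix v assume v: "v \<in> V"
    have "u v \<le> c" unfolding u_eq using l_pos by (intro F_le_c \<zeta>0 less_imp_le)
    thus "restrict u V v \<in> {0..c}" using v u_pos[THEN less_imp_le] by simp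
    have "F \<zeta> (restrict u V) v = F \<zeta> u v" by (rule F_cong) simp
    thus "restrict u V v = F \<zeta> (restrict u V) v" using ul[OF v] v by (simp add: l_def)
  qed auto
  thus ?thesis by blast
qed

definition fixp :: "real \<Rightarrow> 'a \<Rightarrow> real" where
  "fixp \<zeta> = (THE x. x \<in> fixpoints V E c \<zeta>)"

lemma fixpoint_ex1: "subcritical k c \<zeta> \<Longrightarrow> \<exists>!x. x \<in> fixpoints V E c \<zeta>"
  using fixpoint_exists fixpoint_unique by blast

lemma fixp_in_fixpoints:
  assumes "subcritical k c \<zeta>"
  shows "fixp \<zeta> \<in> fixpoints V E c \<zeta>"
  unfolding fixp_def using fixpoint_ex1[OF assms] by (rule theI')

lemma fixpoint_eq_fixp: "subcritical k c \<zeta> \<Longrightarrow> x \<in> fixpoints V E c \<zeta> \<Longrightarrow> x = fixp \<zeta>"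
  using fixpoint_unique fixp_in_fixpoints by blast

lemma fixp_0: "fixp 0 = (\<lambda>v\<in>V. c)"
proof -
  have "subcritical k c 0" by (simp add: subcritical_def)
  moreover have "(\<lambda>v\<in>V. c) \<in> fixpoints V E c 0" unfolding fixpoints_def Fmap_def using c_pos by auto
  ultimately show ?thesis by (metis fixpoint_eq_fixp)
qed

lemma fixp_dist_le:
  assumes \<zeta>: "subcritical k c \<zeta>" and \<zeta>': "subcritical k c \<zeta>'" and v: "v \<in> V"
  shows "\<bar>fixp \<zeta>' v - fixp \<zeta> v\<bar> \<le> c * (exp (B \<zeta> (\<bar>\<zeta>' - \<zeta>\<bar> * c ^ (k - 1))) - 1)"
proof -
  define \<delta> where "\<delta> = \<bar>\<zeta>' - \<zeta>\<bar> * c ^ (k - 1)"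
  have \<delta>: "0 \<le> \<delta>" unfolding \<delta>_def using c_pos by simp
  have x: "fixp \<zeta> \<in> fixpoints V E c \<zeta>" and x': "fixp \<zeta>' \<in> fixpoints V E c \<zeta>'"
    using \<zeta> \<zeta>' by (auto intro: fixp_in_fixpoints)
  have near: "near_fixpoint \<zeta> \<delta> (fixp \<zeta>)" using fixpoint_near_fixpoint[OF x \<delta>] .
  have near': "near_fixpoint \<zeta> \<delta> (fixp \<zeta>')"
    unfolding near_fixpoint_def
  proof
    fix w assume w: "w \<in> V"
    have bounds: "u \<in> V \<Longrightarrow> 0 \<le> fixp \<zeta>' u \<and> fixp \<zeta>' u \<le> c" for u
      using fixpoint_bounds[OF x'] by (auto intro: less_imp_le)
    have "F \<zeta>' (fixp \<zeta>') w \<le> exp \<delta> * F \<zeta> (fixp \<zeta>') w"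
      unfolding \<delta>_def by (rule F_change(1)[OF w bounds])
    moreover have "exp (- \<delta>) * F \<zeta> (fixp \<zeta>') w \<le> F \<zeta>' (fixp \<zeta>') w"
      unfolding \<delta>_def by (rule F_change(2)[OF w bounds])
    ultimately show "0 < fixp \<zeta>' w \<and> exp (- \<delta>) * F \<zeta> (fixp \<zeta>') w \<le> fixp \<zeta>' w
        \<and> fixp \<zeta>' w \<le> exp \<delta> * F \<zeta> (fixp \<zeta>') w"
      using fixpoint_bounds[OF x' w] by simp
  qed
  have "fixp \<zeta>' v \<le> fixp \<zeta> v * exp (B \<zeta> \<delta>)" "fixp \<zeta> v \<le> fixp \<zeta>' v * exp (B \<zeta> \<delta>)"
    using near_fixpoints_ratio_le[OF \<zeta> \<delta>] near near' v by auto
  moreover have "0 < fixp \<zeta>' v" "fixp \<zeta>' v \<le> c" "0 < fixp \<zeta> v" "fixp \<zeta> v \<le> c"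
    using fixpoint_bounds x x' v by auto
  ultimately have "\<bar>fixp \<zeta>' v - fixp \<zeta> v\<bar> \<le> c * (exp (B \<zeta> \<delta>) - 1)"
    by (rule abs_diff_le_of_ratio_le)
  thus ?thesis unfolding \<delta>_def .
qed

lemma continuous_on_fixp:
  assumes \<zeta>0: "subcritical k c \<zeta>0" and v: "v \<in> V"
  shows "continuous_on {0..\<zeta>0} (\<lambda>\<zeta>. fixp \<zeta> v)"
  unfolding continuous_on_def
proof
  fix \<zeta> assume "\<zeta> \<in> {0..\<zeta>0}"
  hence sub: "subcritical k c t" if "t \<in> {0..\<zeta>0}" for t
    using subcritical_mono[OF \<zeta>0 _ _ less_imp_le[OF c_pos]] that by auto
  define g where "g t = c * (exp (B \<zeta> (\<bar>t - \<zeta>\<bar> * c ^ (k - 1))) - 1)" for t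
  have "((\<lambda>t. \<bar>t - \<zeta>\<bar> * c ^ (k - 1)) \<longlongrightarrow> 0) (at \<zeta> within {0..\<zeta>0})"
    by (rule tendsto_eq_intros) (auto intro!: tendsto_eq_intros)
  hence "(g \<longlongrightarrow> c * (exp 0 - 1)) (at \<zeta> within {0..\<zeta>0})"
    unfolding g_def using sub \<open>\<zeta> \<in> {0..\<zeta>0}\<close> by (intro tendsto_intros tendsto_ratio_bound_0)
  hence "(g \<longlongrightarrow> 0) (at \<zeta> within {0..\<zeta>0})" by simp
  moreover have "\<forall>\<^sub>F t in at \<zeta> within {0..\<zeta>0}. norm (fixp t v - fixp \<zeta> v) \<le> g t"
    unfolding g_def eventually_at_filter
    using fixp_dist_le[OF sub sub v] \<open>\<zeta> \<in> {0..\<zeta>0}\<close> by (auto intro!: always_eventually)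
  ultimately have "((\<lambda>t. fixp t v - fixp \<zeta> v) \<longlongrightarrow> 0) (at \<zeta> within {0..\<zeta>0})"
    by (rule Lim_null_comparison[rotated])
  thus "((\<lambda>t. fixp t v) \<longlongrightarrow> fixp \<zeta> v) (at \<zeta> within {0..\<zeta>0})" by (rule LIM_zero_cancel)
qed

lemma edge_sum_le:
  assumes "\<And>u. u \<in> V \<Longrightarrow> 0 \<le> x u \<and> x u \<le> b"
  shows "(\<Sum>e\<in>E. \<Prod>u\<in>e. x u) \<le> real (card E) * b ^ k"
proof -
  have "(\<Sum>e\<in>E. \<Prod>u\<in>e. x u) \<le> (\<Sum>e\<in>E. \<Prod>u\<in>e. b)"
    using assms edges by (intro sum_mono prod_mono) blast
  thus ?thesis by simp
qed

lemma exists_exact_zeta: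
  assumes \<zeta>0: "0 < \<zeta>0" "subcritical k c \<zeta>0" and \<eta>: "\<eta> < 1"
    and le: "(1 - \<zeta>0) * (\<Sum>e\<in>E. \<Prod>u\<in>e. fixp \<zeta>0 u) \<le> \<eta> * c ^ k * real (card E)"
  shows "\<exists>\<zeta>. 0 < \<zeta> \<and> \<zeta> \<le> \<zeta>0 \<and> (\<exists>!x. x \<in> fixpoints V E c \<zeta>) \<and>
           (\<forall>x \<in> fixpoints V E c \<zeta>. (1 - \<zeta>) * (\<Sum>e\<in>E. \<Prod>u\<in>e. x u) = \<eta> * c ^ k * real (card E))"
proof -
  have sub: "subcritical k c t" if "0 \<le> t" "t \<le> \<zeta>0" for t
    using subcritical_mono[OF \<zeta>0(2) that less_imp_le[OF c_pos]] .
  define g where "g t = (1 - t) * (\<Sum>e\<in>E. \<Prod>u\<in>e. fixp t u)" for t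
  have cont: "continuous_on {0..\<zeta>0} g"
    unfolding g_def using edges
    by (intro continuous_intros continuous_on_fixp[OF \<zeta>0(2)]) blast
  have g0: "g 0 = c ^ k * real (card E)"
  proof -
    have "(\<Prod>u\<in>e. fixp 0 u) = c ^ k" if "e \<in> E" for e
      using that edges unfolding fixp_0 by (subst prod.cong[OF refl, of _ _ "\<lambda>_. c"]) auto
    thus ?thesis unfolding g_def by simp
  qed
  have "\<eta> * c ^ k * real (card E) < g 0"
    unfolding g0 using \<eta> c_pos E_nonempty finite_E by (simp add: card_gt_0_iff)
  moreover have "g \<zeta>0 \<le> \<eta> * c ^ k * real (card E)" using le unfolding g_def .
  ultimately obtain \<zeta> where \<zeta>: "0 \<le> \<zeta>" "\<zeta> \<le> \<zeta>0" "g \<zeta> = \<eta> * c ^ k * real (card E)"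
    using IVT2'[of g \<zeta>0 "\<eta> * c ^ k * real (card E)" 0, OF _ _ _ cont] \<zeta>0(1) by auto
  have "\<zeta> \<noteq> 0"
  proof
    assume "\<zeta> = 0"
    thus False using \<zeta>(3) \<open>\<eta> * c ^ k * real (card E) < g 0\<close> by simp
  qed
  moreover have sub\<zeta>: "subcritical k c \<zeta>" using sub \<zeta>(1,2) .
  moreover have "\<forall>x \<in> fixpoints V E c \<zeta>. (1 - \<zeta>) * (\<Sum>e\<in>E. \<Prod>u\<in>e. x u) = \<eta> * c ^ k * real (card E)"
    using \<zeta>(3) fixpoint_eq_fixp[OF sub\<zeta>] unfolding g_def by blast
  ultimately show ?thesis using \<zeta>(1,2) fixpoint_ex1 by (intro exI[of _ \<zeta>]) auto
qed

lemma edge_sum_bound: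
  assumes x: "x \<in> fixpoints V E c \<zeta>" and "\<zeta> \<le> 1"
    and "\<And>u. u \<in> V \<Longrightarrow> x u \<le> b" and "(1 - \<zeta>) * b ^ k \<le> \<eta> * c ^ k"
  shows "(1 - \<zeta>) * (\<Sum>e\<in>E. \<Prod>u\<in>e. x u) \<le> \<eta> * c ^ k * real (card E)"
proof -
  have "(\<Sum>e\<in>E. \<Prod>u\<in>e. x u) \<le> real (card E) * b ^ k"
    using fixpoint_bounds[OF x] assms(3) by (intro edge_sum_le) (auto intro: less_imp_le)
  hence "(1 - \<zeta>) * (\<Sum>e\<in>E. \<Prod>u\<in>e. x u) \<le> (1 - \<zeta>) * (real (card E) * b ^ k)"
    using assms(2) by (intro mult_left_mono) auto
  also have "\<dots> = real (card E) * ((1 - \<zeta>) * b ^ k)" by (simp add: mult_ac)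
  also have "\<dots> \<le> real (card E) * (\<eta> * c ^ k)" using assms(4) by (intro mult_left_mono) auto
  finally show ?thesis by (simp add: mult_ac)
qed

lemma scalar_solution_near_fixpoint:
  assumes \<zeta>0: "0 \<le> \<zeta>0"
    and y: "0 < y" "y = c * exp (- (\<zeta>0 * y ^ (k - 1)))"
    and r: "r \<le> 1" "\<And>w. w \<in> V \<Longrightarrow> r * real D \<le> real (card {e\<in>E. w \<in> e})"
  shows "near_fixpoint \<zeta>0 (\<zeta>0 * (1 - r) * c ^ (k - 1)) (\<lambda>_. y)"
  unfolding near_fixpoint_def
proof (intro ballI conjI)
  fix w assume w: "w \<in> V"
  define \<delta> where "\<delta> = \<zeta>0 * (1 - r) * c ^ (k - 1)"
  have \<delta>: "0 \<le> \<delta>" unfolding \<delta>_def using \<zeta>0 r c_pos by simp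
  have "c * exp (- (\<zeta>0 * y ^ (k - 1))) \<le> c" using \<zeta>0 y(1) c_pos by simp
  hence yc: "y \<le> c" using y(2) by linarith
  define \<rho> where "\<rho> = real (card {e\<in>E. w \<in> e}) / real D"
  have \<rho>: "r \<le> \<rho>" "\<rho> \<le> 1"
    unfolding \<rho>_def using r(2)[OF w] deg_le_maxdeg[OF w] maxdeg_pos by (simp_all add: field_simps)
  have FY: "F \<zeta>0 (\<lambda>_. y) w = c * exp (- (\<zeta>0 * \<rho> * y ^ (k - 1)))"
    unfolding F_eq link_sum_const \<rho>_def by (simp add: algebra_simps)
  have "\<zeta>0 * \<rho> * y ^ (k - 1) \<le> \<zeta>0 * 1 * y ^ (k - 1)"
    using \<rho> \<zeta>0 y(1) by (intro mult_right_mono mult_left_mono) auto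
  hence "c * exp (- (\<zeta>0 * y ^ (k - 1))) \<le> c * exp (- (\<zeta>0 * \<rho> * y ^ (k - 1)))" using c_pos by simp
  hence lower: "y \<le> F \<zeta>0 (\<lambda>_. y) w" unfolding FY using y(2) by linarith
  have "\<zeta>0 * r * y ^ (k - 1) \<le> \<zeta>0 * \<rho> * y ^ (k - 1)"
    using \<rho> \<zeta>0 y(1) by (intro mult_right_mono mult_left_mono) auto
  hence "F \<zeta>0 (\<lambda>_. y) w \<le> c * exp (- (\<zeta>0 * r * y ^ (k - 1)))" unfolding FY using c_pos by simp
  also have "\<dots> = exp (\<zeta>0 * (1 - r) * y ^ (k - 1)) * (c * exp (- (\<zeta>0 * y ^ (k - 1))))"
    by (simp add: mult_exp_exp algebra_simps)
  also have "\<dots> = exp (\<zeta>0 * (1 - r) * y ^ (k - 1)) * y" by (simp only: y(2)[symmetric])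
  also have "\<dots> \<le> exp \<delta> * y"
    unfolding \<delta>_def using \<zeta>0 r y(1) yc by (intro mult_right_mono) (auto intro!: mult_left_mono power_mono)
  finally have upper: "F \<zeta>0 (\<lambda>_. y) w \<le> exp \<delta> * y" .
  have "exp (- \<delta>) * F \<zeta>0 (\<lambda>_. y) w \<le> exp (- \<delta>) * (exp \<delta> * y)"
    using upper by (intro mult_left_mono) auto
  also have "\<dots> = y" by (simp add: mult.assoc[symmetric] mult_exp_exp)
  finally show "exp (- (\<zeta>0 * (1 - r) * c ^ (k - 1))) * F \<zeta>0 (\<lambda>_. y) w \<le> y" unfolding \<delta>_def .
  have "1 * F \<zeta>0 (\<lambda>_. y) w \<le> exp \<delta> * F \<zeta>0 (\<lambda>_. y) w"
    using \<delta> F_pos by (intro mult_right_mono) (auto intro: less_imp_le)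
  thus "y \<le> exp (\<zeta>0 * (1 - r) * c ^ (k - 1)) * F \<zeta>0 (\<lambda>_. y) w" using lower unfolding \<delta>_def by simp
qed (use y in simp)

lemma fixp_le_scalar_solution:
  assumes \<zeta>0: "subcritical k c \<zeta>0"
    and y: "0 < y" "y = c * exp (- (\<zeta>0 * y ^ (k - 1)))" and v: "v \<in> V"
  shows "fixp \<zeta>0 v \<le> y * exp (B \<zeta>0 (\<zeta>0 * (1 - real (mindeg V E) / real D) * c ^ (k - 1)))"
proof -
  define r where "r = real (mindeg V E) / real D"
  have r: "r \<le> 1" "r * real D \<le> real (card {e\<in>E. w \<in> e})" if "w \<in> V" for w
    unfolding r_def using mindeg_le_maxdeg mindeg_le_deg[OF that] maxdeg_pos by (simp_all add: divide_simps)
  have z: "0 \<le> \<zeta>0" and \<delta>: "0 \<le> \<zeta>0 * (1 - r) * c ^ (k - 1)"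
    using \<zeta>0 r v c_pos by (auto simp: subcritical_def)
  have "near_fixpoint \<zeta>0 (\<zeta>0 * (1 - r) * c ^ (k - 1)) (\<lambda>_. y)"
    using r v by (intro scalar_solution_near_fixpoint z y) auto
  thus ?thesis
    using near_fixpoints_ratio_le[OF \<zeta>0 \<delta> fixpoint_near_fixpoint[OF fixp_in_fixpoints[OF \<zeta>0] \<delta>]] v
    unfolding r_def by simp
qed

end

section \<open>The scalar equation and the thresholds\<close>

lemma less_c_k_iff:
  assumes "k \<ge> 2" "\<eta> < 1" "0 < c"
  shows "c < c_k k \<eta> \<longleftrightarrow> real (k - 1) * (1 - \<eta>) * c ^ (k - 1) < exp 1"
proof -
  have rk: "real k - 1 = real (k - 1)" using assms(1) by (simp add: of_nat_diff)
  have "c < c_k k \<eta> \<longleftrightarrow> c ^ (k - 1) < exp 1 / ((1 - \<eta>) * real (k - 1))"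
    unfolding c_k_def rk using assms by (intro less_powr_inverse_iff) auto
  also have "\<dots> \<longleftrightarrow> real (k - 1) * (1 - \<eta>) * c ^ (k - 1) < exp 1"
    using assms by (simp add: pos_less_divide_eq mult_ac)
  finally show ?thesis .
qed

lemma less_cbar_k_imp:
  assumes "k \<ge> 2" "0 < c" "ereal c < cbar_k k \<eta>"
  shows "real (k - 1) * (1 - \<eta> / eta_star k) * c ^ (k - 1) < exp 1"
proof (cases "\<eta> < eta_star k")
  case True
  have rk: "real k - 1 = real (k - 1)" using assms(1) by (simp add: of_nat_diff)
  have "0 < 1 - \<eta> / eta_star k" using True by (simp add: eta_star_def)
  have "c < (exp 1 / (real (k - 1) * (1 - \<eta> / eta_star k))) powr (1 / real (k - 1))"
    using assms(3) True unfolding cbar_k_def rk[symmetric] by simp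
  hence "c ^ (k - 1) < exp 1 / (real (k - 1) * (1 - \<eta> / eta_star k))"
    using assms \<open>0 < 1 - \<eta> / eta_star k\<close> by (subst (asm) less_powr_inverse_iff) auto
  thus ?thesis using \<open>0 < 1 - \<eta> / eta_star k\<close> assms(1) by (simp add: pos_less_divide_eq mult_ac)
next
  case False
  hence "1 - \<eta> / eta_star k \<le> 0" by (simp add: eta_star_def)
  hence "real (k - 1) * (1 - \<eta> / eta_star k) * c ^ (k - 1) \<le> 0"
    using assms by (simp add: mult_nonneg_nonpos mult_nonpos_nonneg)
  thus ?thesis using exp_gt_zero[of 1] by linarith
qed

lemma exists_scalar_param:
  fixes m :: nat and c \<eta> :: real
  assumes m: "0 < m" and c: "0 < c"
    and gap: "(1 - exp 1 / (real m * c ^ m)) * exp (- (real (m + 1) / real m)) < \<eta>"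
  obtains \<tau> where "0 < \<tau>" "real m * \<tau> < 1"
    "(1 - \<tau> * exp (real m * \<tau>) / c ^ m) * exp (- (real (m + 1) * \<tau>)) < \<eta>"
proof -
  define \<phi> where "\<phi> t = (1 - t * exp (real m * t) / c ^ m) * exp (- (real (m + 1) * t))" for t
  have "\<phi> (1 / real m) = (1 - exp 1 / (real m * c ^ m)) * exp (- (real (m + 1) / real m))"
    unfolding \<phi>_def using m by simp
  moreover have "(\<phi> \<longlongrightarrow> \<phi> (1 / real m)) (at_left (1 / real m))"
    unfolding \<phi>_def using c by (intro tendsto_intros) auto
  ultimately have "\<forall>\<^sub>F t in at_left (1 / real m). \<phi> t < \<eta> \<and> t \<in> {0<..<1 / real m}"
    using gap m by (intro eventually_conj order_tendstoD(2) eventually_at_left_real) auto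
  then obtain \<tau> where \<tau>: "\<phi> \<tau> < \<eta>" "0 < \<tau>" "\<tau> < 1 / real m"
    using eventually_happens[of _ "at_left (1 / real m)"] trivial_limit_at_left_real by fastforce
  moreover have "real m * \<tau> < 1" using \<tau>(3) m by (simp add: field_simps)
  ultimately show thesis using that unfolding \<phi>_def by blast
qed

lemma scalar_reference_point:
  fixes k :: nat and c \<eta> :: real
  assumes k: "k \<ge> 2" and c: "0 < c"
    and above_c_k: "exp 1 \<le> real (k - 1) * (1 - \<eta>) * c ^ (k - 1)"
    and below_cbar_k: "real (k - 1) * (1 - \<eta> / eta_star k) * c ^ (k - 1) < exp 1"
  shows "\<exists>\<zeta>0 y. 0 < \<zeta>0 \<and> \<zeta>0 \<le> 1 - \<eta> \<and> subcritical k c \<zeta>0 \<and>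
           0 < y \<and> y = c * exp (- (\<zeta>0 * y ^ (k - 1))) \<and> (1 - \<zeta>0) * y ^ k < \<eta> * c ^ k"
proof -
  define m where "m = k - 1"
  have m: "0 < m" and k_eq: "k = m + 1" using k unfolding m_def by auto
  have cm: "0 < c ^ m" using c by simp
  have es: "eta_star k = exp (- (real (m + 1) / real m))"
    unfolding eta_star_def k_eq by (simp add: minus_divide_left)
  have "1 - \<eta> / eta_star k < exp 1 / (real m * c ^ m)"
    using below_cbar_k m cm unfolding m_def[symmetric] by (simp add: pos_less_divide_eq mult_ac)
  hence "(1 - exp 1 / (real m * c ^ m)) * exp (- (real (m + 1) / real m)) < \<eta>"
    unfolding es by (simp add: field_simps)
  then obtain \<tau> where \<tau>: "0 < \<tau>" "real m * \<tau> < 1"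
    "(1 - \<tau> * exp (real m * \<tau>) / c ^ m) * exp (- (real (m + 1) * \<tau>)) < \<eta>"
    using exists_scalar_param[OF m c] by blast
  define \<zeta>0 where "\<zeta>0 = \<tau> * exp (real m * \<tau>) / c ^ m"
  define y where "y = c * exp (- \<tau>)"
  have "real m * \<tau> * exp (real m * \<tau>) < 1 * exp 1"
    using \<tau> m by (intro mult_strict_mono) auto
  hence sub: "real m * \<zeta>0 * c ^ m < exp 1"
    unfolding \<zeta>0_def using cm by (simp add: mult.assoc)
  hence "real m * c ^ m * \<zeta>0 < real m * c ^ m * (1 - \<eta>)"
    using above_c_k unfolding m_def[symmetric] by (simp add: mult_ac)
  hence "\<zeta>0 < 1 - \<eta>" using m cm by (simp add: mult_less_cancel_left_pos)
  moreover have "0 < \<zeta>0" unfolding \<zeta>0_def using \<tau> cm by simp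
  moreover have "y = c * exp (- (\<zeta>0 * y ^ m))"
  proof -
    have "\<zeta>0 * y ^ m = \<tau>"
      unfolding \<zeta>0_def y_def using c
      by (simp add: power_mult_distrib exp_of_nat_mult[symmetric] mult_exp_exp field_simps)
    thus ?thesis unfolding y_def by simp
  qed
  moreover have "(1 - \<zeta>0) * y ^ k < \<eta> * c ^ k"
  proof -
    have "(1 - \<zeta>0) * y ^ k = c ^ k * ((1 - \<tau> * exp (real m * \<tau>) / c ^ m) * exp (- (real k * \<tau>)))"
      unfolding y_def \<zeta>0_def
      by (simp add: power_mult_distrib exp_of_nat_mult[symmetric] algebra_simps)
    also have "\<dots> < c ^ k * \<eta>" using \<tau> c k_eq by simp
    finally show ?thesis by (simp add: mult.commute)
  qed
  moreover have "0 < y" unfolding y_def using c by simp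
  ultimately show ?thesis
    using sub unfolding subcritical_def m_def by (intro exI[of _ \<zeta>0] exI[of _ y]) auto
qed

section \<open>Sequences of hypergraphs\<close>

lemma hg_fixpoint_intro:
  assumes "uniform_hypergraph k V E" "0 < c" "0 < maxdeg V E"
  shows "hg_fixpoint V E k c"
  using assms unfolding uniform_hypergraph_def hg_fixpoint_def by auto

lemma eventually_maxdeg_pos:
  assumes "filterlim (\<lambda>n. real (maxdeg (V n) (E n))) at_top sequentially"
  shows "\<forall>\<^sub>F n in sequentially. 0 < maxdeg (V n) (E n)"
proof -
  have "\<forall>\<^sub>F n in sequentially. 0 < real (maxdeg (V n) (E n))"
    using assms unfolding filterlim_at_top_dense by blast
  thus ?thesis by simp
qed

lemma exact_zeta_sequence:
  fixes V :: "nat \<Rightarrow> 'a set" and E :: "nat \<Rightarrow> 'a set set"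
  assumes unif: "\<And>n. uniform_hypergraph k (V n) (E n)" and c: "0 < c" and \<eta>: "\<eta> < 1"
    and \<zeta>0: "0 < \<zeta>0" "subcritical k c \<zeta>0"
    and bound: "\<forall>\<^sub>F n in sequentially. 0 < maxdeg (V n) (E n) \<and>
        (\<forall>x\<in>fixpoints (V n) (E n) c \<zeta>0.
           (1 - \<zeta>0) * (\<Sum>e\<in>E n. \<Prod>u\<in>e. x u) \<le> \<eta> * c ^ k * real (card (E n)))"
  shows "\<exists>\<zeta>. \<forall>\<^sub>F n in sequentially. 0 < \<zeta> n \<and> \<zeta> n \<le> \<zeta>0 \<and>
           (\<exists>!x. x \<in> fixpoints (V n) (E n) c (\<zeta> n)) \<and>
           (\<forall>x\<in>fixpoints (V n) (E n) c (\<zeta> n).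
              (1 - \<zeta> n) * (\<Sum>e\<in>E n. \<Prod>u\<in>e. x u) = \<eta> * c ^ k * real (card (E n)))"
proof -
  have "\<forall>\<^sub>F n in sequentially. \<exists>\<zeta>. 0 < \<zeta> \<and> \<zeta> \<le> \<zeta>0 \<and>
           (\<exists>!x. x \<in> fixpoints (V n) (E n) c \<zeta>) \<and>
           (\<forall>x\<in>fixpoints (V n) (E n) c \<zeta>.
              (1 - \<zeta>) * (\<Sum>e\<in>E n. \<Prod>u\<in>e. x u) = \<eta> * c ^ k * real (card (E n)))"
    using bound
  proof eventually_elim
    case (elim n)
    then interpret hg_fixpoint "V n" "E n" k c using hg_fixpoint_intro[OF unif c] by blast
    show ?case using exists_exact_zeta[OF \<zeta>0 \<eta>] elim fixp_in_fixpoints[OF \<zeta>0(2)] by blast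
  qed
  thus ?thesis by (simp add: eventually_ex)
qed

lemma reference_bound_uniform:
  fixes V :: "nat \<Rightarrow> 'a set" and E :: "nat \<Rightarrow> 'a set set"
  assumes unif: "\<And>n. uniform_hypergraph k (V n) (E n)" and c: "0 < c" and \<eta>: "0 \<le> \<eta>"
    and lim: "filterlim (\<lambda>n. real (maxdeg (V n) (E n))) at_top sequentially"
  shows "\<forall>\<^sub>F n in sequentially. 0 < maxdeg (V n) (E n) \<and>
           (\<forall>x\<in>fixpoints (V n) (E n) c (1 - \<eta>).
              (1 - (1 - \<eta>)) * (\<Sum>e\<in>E n. \<Prod>u\<in>e. x u) \<le> \<eta> * c ^ k * real (card (E n)))"
  using eventually_maxdeg_pos[OF lim]
proof eventually_elim
  case (elim n)
  then interpret hg_fixpoint "V n" "E n" k c using hg_fixpoint_intro[OF unif c] by blast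
  have "(1 - (1 - \<eta>)) * (\<Sum>e\<in>E n. \<Prod>u\<in>e. x u) \<le> \<eta> * c ^ k * real (card (E n))"
    if "x \<in> fixpoints (V n) (E n) c (1 - \<eta>)" for x
    using that \<eta> fixpoint_bounds[OF that] by (intro edge_sum_bound[where b = c]) auto
  thus ?case using elim by blast
qed

lemma reference_bound_regular:
  fixes V :: "nat \<Rightarrow> 'a set" and E :: "nat \<Rightarrow> 'a set set"
  assumes k: "k \<ge> 2" and unif: "\<And>n. uniform_hypergraph k (V n) (E n)" and c: "0 < c"
    and \<eta>: "0 \<le> \<eta>"
    and lim: "filterlim (\<lambda>n. real (maxdeg (V n) (E n))) at_top sequentially"
    and reg: "(\<lambda>n. real (mindeg (V n) (E n)) / real (maxdeg (V n) (E n))) \<longlonglongrightarrow> 1"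
    and above_c_k: "exp 1 \<le> real (k - 1) * (1 - \<eta>) * c ^ (k - 1)"
    and below_cbar_k: "real (k - 1) * (1 - \<eta> / eta_star k) * c ^ (k - 1) < exp 1"
  shows "\<exists>\<zeta>0. 0 < \<zeta>0 \<and> \<zeta>0 \<le> 1 \<and> subcritical k c \<zeta>0 \<and>
           (\<forall>\<^sub>F n in sequentially. 0 < maxdeg (V n) (E n) \<and>
              (\<forall>x\<in>fixpoints (V n) (E n) c \<zeta>0.
                 (1 - \<zeta>0) * (\<Sum>e\<in>E n. \<Prod>u\<in>e. x u) \<le> \<eta> * c ^ k * real (card (E n))))"
proof -
  obtain \<zeta>0 y where \<zeta>0: "0 < \<zeta>0" "\<zeta>0 \<le> 1 - \<eta>" "subcritical k c \<zeta>0"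
    and y: "0 < y" "y = c * exp (- (\<zeta>0 * y ^ (k - 1)))" "(1 - \<zeta>0) * y ^ k < \<eta> * c ^ k"
    using scalar_reference_point[OF k c above_c_k below_cbar_k] by blast
  define b where "b n = y * exp (ratio_bound k c \<zeta>0
      (\<zeta>0 * (1 - real (mindeg (V n) (E n)) / real (maxdeg (V n) (E n))) * c ^ (k - 1)))" for n
  have "(\<lambda>n. \<zeta>0 * (1 - real (mindeg (V n) (E n)) / real (maxdeg (V n) (E n))) * c ^ (k - 1))
      \<longlonglongrightarrow> \<zeta>0 * (1 - 1) * c ^ (k - 1)"
    using reg by (intro tendsto_intros)
  hence "(\<lambda>n. (1 - \<zeta>0) * b n ^ k) \<longlonglongrightarrow> (1 - \<zeta>0) * (y * exp 0) ^ k"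
    unfolding b_def using \<zeta>0(3) by (intro tendsto_intros tendsto_ratio_bound_0) auto
  hence "\<forall>\<^sub>F n in sequentially. (1 - \<zeta>0) * b n ^ k < \<eta> * c ^ k"
    using y(3) by (intro order_tendstoD(2)) auto
  with eventually_maxdeg_pos[OF lim]
  have "\<forall>\<^sub>F n in sequentially. 0 < maxdeg (V n) (E n) \<and>
           (\<forall>x\<in>fixpoints (V n) (E n) c \<zeta>0.
              (1 - \<zeta>0) * (\<Sum>e\<in>E n. \<Prod>u\<in>e. x u) \<le> \<eta> * c ^ k * real (card (E n)))"
  proof eventually_elim
    case (elim n)
    then interpret hg_fixpoint "V n" "E n" k c using hg_fixpoint_intro[OF unif c] by blast
    have "x u \<le> b n" if "x \<in> fixpoints (V n) (E n) c \<zeta>0" "u \<in> V n" for x u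
      using fixp_le_scalar_solution[OF \<zeta>0(3) y(1,2) that(2)] fixpoint_eq_fixp[OF \<zeta>0(3) that(1)]
      unfolding b_def by simp
    thus ?case using elim \<zeta>0(2) \<eta> by (auto intro!: edge_sum_bound)
  qed
  thus ?thesis using \<zeta>0 \<eta> by (intro exI[of _ \<zeta>0]) auto
qed

lemma reference_zeta_exists:
  fixes V :: "nat \<Rightarrow> 'a set" and E :: "nat \<Rightarrow> 'a set set"
  assumes k: "k \<ge> 2" and \<eta>: "0 \<le> \<eta>" "\<eta> < 1" and c: "0 < c" and tree: "asymp_tree_like k V E"
    and c_cases: "c < c_k k \<eta> \<or> (approx_regular k V E \<and> ereal c < cbar_k k \<eta>)"
  shows "\<exists>\<zeta>0. 0 < \<zeta>0 \<and> \<zeta>0 \<le> 1 \<and> subcritical k c \<zeta>0 \<and>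
           (\<forall>\<^sub>F n in sequentially. 0 < maxdeg (V n) (E n) \<and>
              (\<forall>x\<in>fixpoints (V n) (E n) c \<zeta>0.
                 (1 - \<zeta>0) * (\<Sum>e\<in>E n. \<Prod>u\<in>e. x u) \<le> \<eta> * c ^ k * real (card (E n))))"
proof -
  have unif: "\<And>n. uniform_hypergraph k (V n) (E n)"
    and lim: "filterlim (\<lambda>n. real (maxdeg (V n) (E n))) at_top sequentially"
    using tree unfolding asymp_tree_like_def by auto
  show ?thesis
  proof (cases "c < c_k k \<eta>")
    case True
    hence "subcritical k c (1 - \<eta>)"
      using less_c_k_iff[OF k \<eta>(2) c] \<eta> unfolding subcritical_def by (simp add: mult_ac)
    thus ?thesis using reference_bound_uniform[OF unif c \<eta>(1) lim] \<eta> by (intro exI[of _ "1 - \<eta>"]) auto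
  next
    case False
    with c_cases have "(\<lambda>n. real (mindeg (V n) (E n)) / real (maxdeg (V n) (E n))) \<longlonglongrightarrow> 1"
      and "ereal c < cbar_k k \<eta>"
      unfolding approx_regular_def by auto
    moreover have "exp 1 \<le> real (k - 1) * (1 - \<eta>) * c ^ (k - 1)"
      using False less_c_k_iff[OF k \<eta>(2) c] by simp
    ultimately show ?thesis
      using reference_bound_regular[OF k unif c \<eta>(1) lim] less_cbar_k_imp[OF k c] by blast
  qed
qed

theorem mainTheorem9:
  fixes k :: nat and \<eta> c :: real and V :: "nat \<Rightarrow> 'a set" and E :: "nat \<Rightarrow> 'a set set"
  assumes "k \<ge> 2" and "0 \<le> \<eta>" and "\<eta> < 1" and "0 < c"
    and "asymp_tree_like k V E"
    and "c < c_k k \<eta> \<or> (approx_regular k V E \<and> ereal c < cbar_k k \<eta>)"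
  shows "\<exists>\<zeta> :: nat \<Rightarrow> real.
           (\<forall>\<^sub>F n in sequentially. 0 < \<zeta> n \<and> \<zeta> n \<le> 1) \<and>
           limsup (\<lambda>n. ereal (\<zeta> n * (real k - 1) * c ^ (k - 1))) < ereal (exp 1) \<and>
           (\<forall>\<^sub>F n in sequentially. \<exists>!x. x \<in> fixpoints (V n) (E n) c (\<zeta> n)) \<and>
           (\<exists>\<epsilon> :: nat \<Rightarrow> real. \<epsilon> \<longlonglongrightarrow> 0 \<and>
              (\<forall>\<^sub>F n in sequentially. \<forall>x \<in> fixpoints (V n) (E n) c (\<zeta> n).
                 (1 - \<zeta> n) * (\<Sum>e\<in>E n. \<Prod>u\<in>e. x u)
                   = (1 + \<epsilon> n) * (\<eta> * c ^ k * real (card (E n)))))"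
proof -
  have unif: "\<And>n. uniform_hypergraph k (V n) (E n)"
    using assms(5) unfolding asymp_tree_like_def by auto
  obtain \<zeta>0 where \<zeta>0: "0 < \<zeta>0" "\<zeta>0 \<le> 1" "subcritical k c \<zeta>0"
    and bound: "\<forall>\<^sub>F n in sequentially. 0 < maxdeg (V n) (E n) \<and>
        (\<forall>x\<in>fixpoints (V n) (E n) c \<zeta>0.
           (1 - \<zeta>0) * (\<Sum>e\<in>E n. \<Prod>u\<in>e. x u) \<le> \<eta> * c ^ k * real (card (E n)))"
    using reference_zeta_exists[OF assms] by blast
  obtain \<zeta> where \<zeta>: "\<forall>\<^sub>F n in sequentially. 0 < \<zeta> n \<and> \<zeta> n \<le> \<zeta>0 \<and>
           (\<exists>!x. x \<in> fixpoints (V n) (E n) c (\<zeta> n)) \<and>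
           (\<forall>x\<in>fixpoints (V n) (E n) c (\<zeta> n).
              (1 - \<zeta> n) * (\<Sum>e\<in>E n. \<Prod>u\<in>e. x u) = \<eta> * c ^ k * real (card (E n)))"
    using exact_zeta_sequence[OF unif assms(4,3) \<zeta>0(1,3) bound] by blast
  have "limsup (\<lambda>n. ereal (\<zeta> n * (real k - 1) * c ^ (k - 1))) \<le> ereal (\<zeta>0 * (real k - 1) * c ^ (k - 1))"
    using \<zeta> assms(1,4) by (intro Limsup_bounded) (auto elim!: eventually_mono intro!: mult_right_mono)
  also have "\<dots> < ereal (exp 1)"
    using \<zeta>0(3) assms(1) unfolding subcritical_def by (simp add: of_nat_diff mult_ac)
  finally show ?thesis
    using \<zeta> \<zeta>0(2) by (intro exI[of _ \<zeta>] conjI exI[of _ "\<lambda>_. 0"]) (auto elim!: eventually_mono)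
qed

end
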